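(* Let $R$ be a non-trivial totally ordered positive aura such that $x>y$ implies that there exists $t>0$ with $x=y+t$, and suppose that the canonical map $\mathbb{N}\to R$ is injective. If $R$ is archimedean, then $R$ has tempered growth.
   Context: A halo is a commutative unital semiring with a partial order compatible with its operations ($x\le z,y\le t\Rightarrow xy\le zt,\ x+y\le z+t$). An aura is a halo whose underlying semiring is a semifield; it is positive if $0<1$. A halo is trivial if it is $\{0\}$ or equal to $\{0,1\}$ with $0\le1$, $1+1=1$. A positive halo $A$ is archimedean if $A$ is not reduced to $\{0,1\}$ and for all $x>y>0$ there is $n\in\mathbb{N}$ with $ny>x$. A halo $R$ has tempered growth if for every non-zero $P\in\mathbb{N}[X]$ and $x\in R$, ($x^n\le P(n)$ for all $n\in\mathbb{N}$) implies $x\le1$, where natural numbers are interpreted in $R$ as sums of $1$. *)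

theory Defs
  imports Main "HOL-Computational_Algebra.Polynomial"
begin

definition halo_compat :: "'a::{comm_semiring_1,order} itself \<Rightarrow> bool" where
  "halo_compat _ \<longleftrightarrow>
     (\<forall>x y z t :: 'a. x \<le> z \<longrightarrow> y \<le> t \<longrightarrow> x * y \<le> z * t \<and> x + y \<le> z + t)"

definition semifield :: "'a::comm_semiring_1 itself \<Rightarrow> bool" where
  "semifield _ \<longleftrightarrow> (\<forall>x :: 'a. x \<noteq> 0 \<longrightarrow> (\<exists>y. x * y = 1))"

definition aura :: "'a::{comm_semiring_1,order} itself \<Rightarrow> bool" where
  "aura T \<longleftrightarrow> halo_compat T \<and> semifield TYPE('a)"

definition positive_halo :: "'a::{comm_semiring_1,order} itself \<Rightarrow> bool" where
  "positive_halo T \<longleftrightarrow> halo_compat T \<and> (0::'a) < 1"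

definition trivial_halo :: "'a::{comm_semiring_1,order} itself \<Rightarrow> bool" where
  "trivial_halo _ \<longleftrightarrow> (UNIV = {0::'a}) \<or>
     (UNIV = {0::'a, 1} \<and> (0::'a) \<le> 1 \<and> (1::'a) + 1 = 1)"

definition archimedean_halo :: "'a::{comm_semiring_1,order} itself \<Rightarrow> bool" where
  "archimedean_halo _ \<longleftrightarrow> UNIV \<noteq> {0::'a, 1} \<and>
     (\<forall>x y :: 'a. x > y \<and> y > 0 \<longrightarrow> (\<exists>n::nat. of_nat n * y > x))"

definition tempered_growth :: "'a::{comm_semiring_1,order} itself \<Rightarrow> bool" where
  "tempered_growth _ \<longleftrightarrow>
     (\<forall>(P::nat poly) (x::'a). P \<noteq> 0 \<longrightarrow> (\<forall>n::nat. x ^ n \<le> of_nat (poly P n)) \<longrightarrow> x \<le> 1)"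

end

theory Submission imports Defs begin

text \<open>If \<open>x > 1\<close>, write \<open>x = 1 + t\<close> with \<open>t > 0\<close>. Bernoulli's inequality
  \<open>(1 + t)\<^sup>n \<ge> 1 + n t\<close> holds in any positive halo, and the archimedean property yields \<open>N\<close>
  with \<open>N t \<ge> 1\<close>, so \<open>x\<^sup>N \<ge> 2\<close> and \<open>x\<^sup>N\<^sup>j \<ge> 2\<^sup>j\<close>. The bound \<open>x\<^sup>N\<^sup>j \<le> P(N j)\<close>
  then gives \<open>2\<^sup>j \<le> P(N j)\<close> in \<open>R\<close>, hence in \<open>\<nat>\<close> because \<open>\<nat> \<rightarrow> R\<close> is monotone and
  injective and \<open>R\<close> is totally ordered; this fails for large \<open>j\<close>.\<close>

lemma linear_less_power2: "K * (3 * (K + 1) + 1) < (2::nat) ^ (3 * (K + 1))"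
proof -
  have "K + 2 \<le> (2::nat) ^ (K + 1)"
    by (induction K) auto
  then have "(K + 2) ^ 3 \<le> ((2::nat) ^ (K + 1)) ^ 3"
    by (rule power_mono) simp
  also have "\<dots> = 2 ^ (3 * (K + 1))"
    by (metis power_mult mult.commute)
  finally show ?thesis
    by (simp add: power3_eq_cube algebra_simps)
qed

lemma ex_poly_less_power2: "\<exists>j. (C::nat) * (j + 1) ^ d < 2 ^ j"
proof (cases "C = 0")
  case True
  then show ?thesis by auto
next
  case False
  \<comment> \<open>Witness \<open>j = e i\<close>: \<open>C (e i + 1)\<^sup>d \<le> (C e (i + 1))\<^sup>e < 2\<^sup>e\<^sup>i\<close>.\<close>
  define e where "e = d + 1"
  define K where "K = C * e"
  define i where "i = 3 * (K + 1)"
  have e: "e > 0" "d \<le> e"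
    by (auto simp: e_def)
  have "(K * (i + 1)) ^ e < (2 ^ i) ^ e"
    using linear_less_power2[of K] e by (simp add: i_def power_strict_mono)
  also have "\<dots> = 2 ^ (e * i)"
    by (metis power_mult mult.commute)
  finally have less: "(K * (i + 1)) ^ e < 2 ^ (e * i)" .
  have "C * (e * i + 1) ^ d \<le> C * (e * (i + 1)) ^ d"
    using e by (intro mult_le_mono2 power_mono) auto
  also have "\<dots> = C * e ^ d * (i + 1) ^ d"
    by (simp only: power_mult_distrib mult.assoc)
  also have "\<dots> \<le> C ^ e * e ^ e * (i + 1) ^ e"
  proof (intro mult_le_mono)
    show "C \<le> C ^ e"
      using False e by (metis One_nat_def Suc_leI neq0_conv power_increasing power_one_right)
  qed (use e in \<open>auto intro: power_increasing\<close>)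
  also have "\<dots> = (K * (i + 1)) ^ e"
    unfolding K_def by (simp only: power_mult_distrib)
  finally show ?thesis
    using less by (intro exI[of _ "e * i"]) auto
qed

lemma poly_nat_le: "poly (P::nat poly) n \<le> poly P 1 * (n + 1) ^ degree P"
proof -
  have "poly P n = (\<Sum>i\<le>degree P. coeff P i * n ^ i)"
    by (simp add: poly_altdef)
  also have "\<dots> \<le> (\<Sum>i\<le>degree P. coeff P i * (n + 1) ^ degree P)"
  proof (intro sum_mono mult_le_mono2)
    fix i assume "i \<in> {..degree P}"
    then have "n ^ i \<le> (n + 1) ^ i" "(n + 1) ^ i \<le> (n + 1) ^ degree P"
      by (auto intro: power_mono power_increasing)
    then show "n ^ i \<le> (n + 1) ^ degree P" by linarith
  qed
  also have "\<dots> = poly P 1 * (n + 1) ^ degree P"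
    by (simp add: poly_altdef sum_distrib_right)
  finally show ?thesis .
qed

lemma ex_poly_nat_mult_less_power2: "\<exists>j. poly (P::nat poly) (N * j) < 2 ^ j"
proof -
  obtain j where j: "(poly P 1 * (N + 1) ^ degree P) * (j + 1) ^ degree P < 2 ^ j"
    using ex_poly_less_power2 by blast
  have "poly P (N * j) \<le> poly P 1 * (N * j + 1) ^ degree P"
    by (rule poly_nat_le)
  also have "\<dots> \<le> poly P 1 * ((N + 1) * (j + 1)) ^ degree P"
    by (intro mult_le_mono2 power_mono) (auto simp: algebra_simps)
  also have "\<dots> = (poly P 1 * (N + 1) ^ degree P) * (j + 1) ^ degree P"
    by (simp only: power_mult_distrib mult.assoc)
  finally show ?thesis
    using j by (intro exI[of _ j]) linarith
qed

context
  assumes pos: "positive_halo TYPE('a::{comm_semiring_1,order})"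
begin

lemma halo_mult_mono: "x \<le> z \<Longrightarrow> y \<le> t \<Longrightarrow> x * y \<le> z * (t::'a)"
  and halo_add_mono: "x \<le> z \<Longrightarrow> y \<le> t \<Longrightarrow> x + y \<le> z + (t::'a)"
  using pos unfolding positive_halo_def halo_compat_def by blast+

lemma halo_nonneg: "0 \<le> (x::'a)"
  using halo_mult_mono[of 0 1 x x] pos unfolding positive_halo_def by force

lemma halo_le_add: "u \<le> u + (v::'a)"
  using halo_add_mono[OF order_refl halo_nonneg, of u v] by simp

lemma halo_of_nat_mono: "p \<le> q \<Longrightarrow> (of_nat p::'a) \<le> of_nat q"
  by (metis halo_le_add le_add_diff_inverse of_nat_add)

lemma halo_power_mono: "u \<le> v \<Longrightarrow> u ^ k \<le> (v::'a) ^ k"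
  by (induction k) (auto intro: halo_mult_mono)

lemma halo_bernoulli: "1 + of_nat n * t \<le> (1 + t::'a) ^ n"
proof (induction n)
  case 0
  then show ?case by simp
next
  case (Suc n)
  have "1 + of_nat (Suc n) * t = (1 + of_nat n * t) + t"
    by (simp add: algebra_simps)
  also have "\<dots> \<le> (1 + of_nat n * t) + t + of_nat n * t * t"
    by (rule halo_le_add)
  also have "\<dots> = (1 + of_nat n * t) * (1 + t)"
    by (simp add: algebra_simps)
  also have "\<dots> \<le> (1 + t) ^ n * (1 + t)"
    using Suc by (intro halo_mult_mono) auto
  finally show ?case
    by (simp add: mult.commute)
qed

lemma halo_power2_le_power:
  assumes "1 \<le> of_nat N * t"
  shows "of_nat (2 ^ j) \<le> (1 + t::'a) ^ (N * j)"
proof -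
  have "(of_nat 2::'a) \<le> 1 + of_nat N * t"
    using halo_add_mono[OF order_refl assms, of 1] by simp
  also have "\<dots> \<le> (1 + t) ^ N"
    by (rule halo_bernoulli)
  finally have "(of_nat 2::'a) ^ j \<le> ((1 + t) ^ N) ^ j"
    by (rule halo_power_mono)
  then show ?thesis
    by (simp add: power_mult)
qed

end

lemma of_nat_le_iff_if_inj:
  assumes "positive_halo TYPE('a::{comm_semiring_1,linorder})"
    and "inj (of_nat :: nat \<Rightarrow> 'a)"
  shows "(of_nat p::'a) \<le> of_nat q \<longleftrightarrow> p \<le> q"
  using halo_of_nat_mono[OF assms(1)] assms(2)
  by (metis antisym inj_eq nle_le)

lemma archimedean_ex_of_nat_mult_ge_1:
  assumes "archimedean_halo TYPE('a::{comm_semiring_1,linorder})" and "t > (0::'a)"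
  obtains N where "1 \<le> of_nat N * t"
proof (cases "t < 1")
  case True
  then obtain N where "of_nat N * t > 1"
    using assms unfolding archimedean_halo_def by blast
  then show ?thesis using that[of N] by simp
next
  case False
  then show ?thesis using that[of 1] by simp
qed

theorem lemma1p29:
  assumes "aura TYPE('a::{comm_semiring_1,linorder})"
    and "positive_halo TYPE('a)"
    and "\<not> trivial_halo TYPE('a)"
    and "\<forall>x y :: 'a. x > y \<longrightarrow> (\<exists>t>0. x = y + t)"
    and "inj (of_nat :: nat \<Rightarrow> 'a)"
    and "archimedean_halo TYPE('a)"
  shows "tempered_growth TYPE('a)"
  unfolding tempered_growth_def
proof (intro allI impI)
  fix P :: "nat poly" and x :: 'a
  assume bound: "\<forall>n. x ^ n \<le> of_nat (poly P n)"
  show "x \<le> 1"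
  proof (rule ccontr)
    assume "\<not> x \<le> 1"
    then obtain t where t: "t > 0" "x = 1 + t"
      using assms(4) by (metis not_le)
    obtain N where N: "1 \<le> of_nat N * t"
      using archimedean_ex_of_nat_mult_ge_1[OF assms(6) t(1)] .
    have "(of_nat (2 ^ j)::'a) \<le> of_nat (poly P (N * j))" for j
      using halo_power2_le_power[OF assms(2) N, of j] bound t(2) order_trans by blast
    then have "2 ^ j \<le> poly P (N * j)" for j
      using of_nat_le_iff_if_inj[OF assms(2,5)] by blast
    moreover obtain j where "poly P (N * j) < 2 ^ j"
      using ex_poly_nat_mult_less_power2 by blast
    ultimately show False
      using leD by blast
  qed
qed

end
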